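(* The polynomials $J$, $\Gamma$ and $B$ are $SL_2(\mathbb{F}_q)$-invariant.
   Context: Let $p>2$ be a prime, $q=p^n$, and $\mathbb{F}$ a field of characteristic $p$ containing $\mathbb{F}_q$. The group $GL_2(\mathbb{F})$ (hence $SL_2(\mathbb{F}_q)$) acts on the right on $\mathbb{F}[a_0,a_1,a_2]$ by algebra automorphisms: for $g=\begin{pmatrix}\alpha&\beta'\\ \gamma'&\delta\end{pmatrix}$, $a_2 g=\alpha^2a_2+2\alpha\beta' a_1+\beta'^2a_0$, $a_1g=\alpha\gamma' a_2+(\alpha\delta+\beta'\gamma')a_1+\beta'\delta a_0$, $a_0g=\gamma'^2a_2+2\gamma'\delta a_1+\delta^2a_0$. Define $\beta=\prod_{c\in\mathbb{F}_q}(a_1+ca_0)$ and for $k\in\mathbb{F}_q$, $\gamma_k=\prod_{c\in\mathbb{F}_q}(a_2+2ca_1+(c^2-k)a_0)$. Let $\mathcal{Q}$ be the set of nonzero quadratic residues in $\mathbb{F}_q$ and $\overline{\mathcal{Q}}$ the set of quadratic nonresidues. Define $\Gamma=\prod_{k\in\overline{\mathcal{Q}}}\gamma_k$, $B=\beta\prod_{k\in\mathcal{Q}}\gamma_k$, $J=a_0\gamma_0$. *)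

theory Defs
  imports "HOL-Computational_Algebra.Polynomial"
begin

text \<open>The polynomial ring F[a0,a1,a2] is represented as the iterated univariate
polynomial ring ('a poly) poly) poly. The variable a0 is the outermost
indeterminate, a1 the middle one, a2 the innermost one.\<close>

definition C3 :: "'a::comm_ring_1 \<Rightarrow> 'a poly poly poly" where
  "C3 c = [:[:[:c:]:]:]"

definition A0 :: "'a::comm_ring_1 poly poly poly" where
  "A0 = [:0, 1:]"

definition A1 :: "'a::comm_ring_1 poly poly poly" where
  "A1 = [:[:0, 1:]:]"

definition A2 :: "'a::comm_ring_1 poly poly poly" where
  "A2 = [:[:[:0, 1:]:]:]"

definition Fq :: "nat \<Rightarrow> 'a::field set" where
  "Fq q = {x. x ^ q = x}"

definition QR :: "'a::field set \<Rightarrow> 'a set" where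
  "QR K = {k \<in> K. k \<noteq> 0 \<and> (\<exists>c\<in>K. c ^ 2 = k)}"

definition QNR :: "'a::field set \<Rightarrow> 'a set" where
  "QNR K = {k \<in> K. \<not> (\<exists>c\<in>K. c ^ 2 = k)}"

text \<open>Polynomials as expressions in the generators (x0,x1,x2) = (a0,a1,a2);
evaluating at other elements of the polynomial ring is substitution.\<close>

definition betaP :: "'a::field set \<Rightarrow> 'a poly poly poly \<Rightarrow> 'a poly poly poly \<Rightarrow> 'a poly poly poly \<Rightarrow> 'a poly poly poly" where
  "betaP K x0 x1 x2 = (\<Prod>c\<in>K. x1 + C3 c * x0)"

definition gammaP :: "'a::field set \<Rightarrow> 'a \<Rightarrow> 'a poly poly poly \<Rightarrow> 'a poly poly poly \<Rightarrow> 'a poly poly poly \<Rightarrow> 'a poly poly poly" where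
  "gammaP K k x0 x1 x2 = (\<Prod>c\<in>K. x2 + C3 (2 * c) * x1 + C3 (c ^ 2 - k) * x0)"

definition GammaP :: "'a::field set \<Rightarrow> 'a poly poly poly \<Rightarrow> 'a poly poly poly \<Rightarrow> 'a poly poly poly \<Rightarrow> 'a poly poly poly" where
  "GammaP K x0 x1 x2 = (\<Prod>k\<in>QNR K. gammaP K k x0 x1 x2)"

definition BP :: "'a::field set \<Rightarrow> 'a poly poly poly \<Rightarrow> 'a poly poly poly \<Rightarrow> 'a poly poly poly \<Rightarrow> 'a poly poly poly" where
  "BP K x0 x1 x2 = betaP K x0 x1 x2 * (\<Prod>k\<in>QR K. gammaP K k x0 x1 x2)"

definition JP :: "'a::field set \<Rightarrow> 'a poly poly poly \<Rightarrow> 'a poly poly poly \<Rightarrow> 'a poly poly poly \<Rightarrow> 'a poly poly poly" where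
  "JP K x0 x1 x2 = x0 * gammaP K 0 x0 x1 x2"

text \<open>Images of the generators under g = (alpha, beta'; gamma', delta).\<close>
definition act2 :: "'a::field \<Rightarrow> 'a \<Rightarrow> 'a \<Rightarrow> 'a \<Rightarrow> 'a poly poly poly" where
  "act2 \<alpha> \<beta> \<gamma> \<delta> = C3 (\<alpha>^2) * A2 + C3 (2 * \<alpha> * \<beta>) * A1 + C3 (\<beta>^2) * A0"

definition act1 :: "'a::field \<Rightarrow> 'a \<Rightarrow> 'a \<Rightarrow> 'a \<Rightarrow> 'a poly poly poly" where
  "act1 \<alpha> \<beta> \<gamma> \<delta> = C3 (\<alpha> * \<gamma>) * A2 + C3 (\<alpha> * \<delta> + \<beta> * \<gamma>) * A1 + C3 (\<beta> * \<delta>) * A0"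

definition act0 :: "'a::field \<Rightarrow> 'a \<Rightarrow> 'a \<Rightarrow> 'a \<Rightarrow> 'a poly poly poly" where
  "act0 \<alpha> \<beta> \<gamma> \<delta> = C3 (\<gamma>^2) * A2 + C3 (2 * \<gamma> * \<delta>) * A1 + C3 (\<delta>^2) * A0"

end

theory Submission
  imports Defs "HOL-Computational_Algebra.Primes"
begin

text \<open>A coefficient vector \<open>(x, y, z)\<close> stands for the linear form \<open>x a\<^sub>2 + y a\<^sub>1 + z a\<^sub>0\<close>,
and \<open>g\<close> acts on such forms through a linear map of the vectors that multiplies the
discriminant \<open>y\<^sup>2 - 4xz\<close> by \<open>det g\<^sup>2\<close>. Each of \<open>J\<close>, \<open>\<Gamma>\<close>, \<open>B\<close> is the product of the forms
over all vectors in \<open>F\<^sub>q\<^sup>3\<close> whose first nonzero coordinate is 1 and whose quarter-discriminant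
lies in a fixed square class: \<open>{0}\<close>, the nonsquares, or the nonzero squares. An element
\<open>g \<in> SL\<^sub>2(F\<^sub>q)\<close> permutes these normalized vectors up to nonzero scalars, so it multiplies each
product by a constant \<open>\<chi>(g)\<close>. The constant is multiplicative in \<open>g\<close> and equals 1 on
unitriangular matrices, which generate \<open>SL\<^sub>2(F\<^sub>q)\<close>; hence \<open>\<chi> = 1\<close>.\<close>

type_synonym 'a vec3 = "'a \<times> 'a \<times> 'a"
type_synonym 'a mat2 = "'a \<times> 'a \<times> 'a \<times> 'a"

lemma C3_add: "C3 (a + b) = C3 a + C3 b"
  by (simp add: C3_def)

lemma C3_mult: "C3 (a * b) = C3 a * C3 b"
  by (simp add: C3_def)

lemma C3_0: "C3 0 = 0"
  by (simp add: C3_def)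

lemma C3_1: "C3 1 = 1"
  by (simp add: C3_def pCons_one)

lemma C3_power: "C3 (a ^ n) = C3 a ^ n"
  by (induct n) (simp_all add: C3_1 C3_mult)

lemma C3_prod: "C3 (prod f A) = (\<Prod>x\<in>A. C3 (f x))"
  by (induct A rule: infinite_finite_induct) (simp_all add: C3_1 C3_mult)

definition linform :: "'a::comm_ring_1 poly poly poly \<Rightarrow> 'a poly poly poly \<Rightarrow> 'a poly poly poly \<Rightarrow>
    'a vec3 \<Rightarrow> 'a poly poly poly" where
  "linform x0 x1 x2 v = (case v of (a, b, c) \<Rightarrow> C3 a * x2 + C3 b * x1 + C3 c * x0)"

definition coef_action :: "'a::comm_ring_1 mat2 \<Rightarrow> 'a vec3 \<Rightarrow> 'a vec3" where
  "coef_action g v = (case g of (a, b, c, d) \<Rightarrow> case v of (x, y, z) \<Rightarrow>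
     (x * a\<^sup>2 + y * (a * c) + z * c\<^sup>2,
      x * (2 * a * b) + y * (a * d + b * c) + z * (2 * c * d),
      x * b\<^sup>2 + y * (b * d) + z * d\<^sup>2))"

definition mat_mult :: "'a::comm_ring_1 mat2 \<Rightarrow> 'a mat2 \<Rightarrow> 'a mat2" where
  "mat_mult g h = (case g of (a, b, c, d) \<Rightarrow> case h of (a', b', c', d') \<Rightarrow>
     (a * a' + b * c', a * b' + b * d', c * a' + d * c', c * b' + d * d'))"

definition adjugate :: "'a::comm_ring_1 mat2 \<Rightarrow> 'a mat2" where
  "adjugate g = (case g of (a, b, c, d) \<Rightarrow> (d, - b, - c, a))"

definition det2 :: "'a::comm_ring_1 mat2 \<Rightarrow> 'a" where
  "det2 g = (case g of (a, b, c, d) \<Rightarrow> a * d - b * c)"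

definition disc3 :: "'a::comm_ring_1 vec3 \<Rightarrow> 'a" where
  "disc3 v = (case v of (x, y, z) \<Rightarrow> y\<^sup>2 - 4 * x * z)"

definition scale3 :: "'a::comm_ring_1 \<Rightarrow> 'a vec3 \<Rightarrow> 'a vec3" where
  "scale3 l v = (case v of (x, y, z) \<Rightarrow> (l * x, l * y, l * z))"

definition lead3 :: "'a::comm_ring_1 vec3 \<Rightarrow> 'a" where
  "lead3 v = (case v of (x, y, z) \<Rightarrow> if x \<noteq> 0 then x else if y \<noteq> 0 then y else z)"

definition monic3 :: "'a::field vec3 \<Rightarrow> 'a vec3" where
  "monic3 v = scale3 (inverse (lead3 v)) v"

lemma linform_act:
  "linform (act0 a b c d) (act1 a b c d) (act2 a b c d) v = linform A0 A1 A2 (coef_action (a, b, c, d) v)"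
  by (cases v) (simp add: linform_def coef_action_def act0_def act1_def act2_def
      C3_mult C3_add C3_power algebra_simps)

lemma linform_scale3: "linform x0 x1 x2 (scale3 l v) = C3 l * linform x0 x1 x2 v"
  by (cases v) (simp add: linform_def scale3_def C3_mult algebra_simps)

lemma coef_action_mat_mult: "coef_action (mat_mult g h) v = coef_action h (coef_action g v)"
  by (cases g; cases h; cases v) (simp add: coef_action_def mat_mult_def power2_eq_square algebra_simps)

lemma coef_action_adjugate:
  assumes "det2 g = 1"
  shows "coef_action (adjugate g) (coef_action g v) = v"
proof -
  have "mat_mult g (adjugate g) = (1, 0, 0, 1)"
    using assms by (cases g) (simp add: mat_mult_def adjugate_def det2_def algebra_simps)
  moreover have "coef_action (1, 0, 0, 1) v = v"
    by (cases v) (simp add: coef_action_def)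
  ultimately show ?thesis
    by (metis coef_action_mat_mult)
qed

lemma coef_action_scale3: "coef_action g (scale3 l v) = scale3 l (coef_action g v)"
  by (cases g; cases v) (simp add: coef_action_def scale3_def algebra_simps)

lemma disc3_coef_action: "disc3 (coef_action g v) = (det2 g)\<^sup>2 * disc3 v"
  by (cases g; cases v) (simp add: coef_action_def disc3_def det2_def power2_eq_square algebra_simps)

lemma disc3_scale3: "disc3 (scale3 l v) = l\<^sup>2 * disc3 v"
  by (cases v) (simp add: disc3_def scale3_def power2_eq_square algebra_simps)

lemma lead3_eq_0_iff: "lead3 v = 0 \<longleftrightarrow> v = (0, 0, 0)"
  by (cases v) (simp add: lead3_def)

lemma lead3_eq_1_iff: "lead3 (x, y, z) = 1 \<longleftrightarrow> x = 1 \<or> x = 0 \<and> y = 1 \<or> x = 0 \<and> y = 0 \<and> z = 1"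
  by (auto simp: lead3_def)

lemma lead3_scale3: "(l::'a::idom) \<noteq> 0 \<Longrightarrow> lead3 (scale3 l v) = l * lead3 v"
  by (cases v) (auto simp: lead3_def scale3_def)

lemma scale3_scale3: "scale3 a (scale3 b v) = scale3 (a * b) v"
  by (cases v) (simp add: scale3_def)

lemma scale3_1: "scale3 1 v = v"
  by (cases v) (simp add: scale3_def)

lemma scale3_lead3_monic3: "lead3 v \<noteq> 0 \<Longrightarrow> scale3 (lead3 v) (monic3 v) = v"
  by (cases v) (simp add: monic3_def scale3_def)

lemma lead3_monic3: "lead3 v \<noteq> 0 \<Longrightarrow> lead3 (monic3 v) = 1"
  by (simp add: monic3_def lead3_scale3)

lemma lead3_coef_action_nonzero:
  assumes "det2 g = 1" "v \<noteq> (0, 0, 0)"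
  shows "lead3 (coef_action g v) \<noteq> 0"
proof
  assume "lead3 (coef_action g v) = 0"
  then have "coef_action (adjugate g) (coef_action g v) = coef_action (adjugate g) (0, 0, 0)"
    by (simp add: lead3_eq_0_iff)
  also have "\<dots> = (0, 0, 0)"
    by (cases "adjugate g") (simp add: coef_action_def)
  finally show False
    using assms by (simp add: coef_action_adjugate)
qed

definition SL2 :: "'a::comm_ring_1 set \<Rightarrow> 'a mat2 set" where
  "SL2 K = {g \<in> K \<times> K \<times> K \<times> K. det2 g = 1}"

definition monic_forms :: "'a::field set \<Rightarrow> 'a set \<Rightarrow> 'a vec3 set" where
  "monic_forms K S = {v \<in> K \<times> K \<times> K. lead3 v = 1 \<and> disc3 v / 4 \<in> S}"

definition multiplier :: "'a::field set \<Rightarrow> 'a set \<Rightarrow> 'a mat2 \<Rightarrow> 'a" where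
  "multiplier K S g = (\<Prod>v\<in>monic_forms K S. lead3 (coef_action g v))"

lemma multiplier_upper: "multiplier K S (1, x, 0, 1) = 1"
proof -
  have "lead3 (coef_action (1, x, 0, 1) v) = lead3 v" for v
    by (cases v) (simp add: coef_action_def lead3_def)
  then show ?thesis
    unfolding multiplier_def by (intro prod.neutral) (simp add: monic_forms_def)
qed

locale finite_subfield =
  fixes K :: "'a::field set"
  assumes finite: "finite K"
    and zero_mem: "0 \<in> K"
    and one_mem: "1 \<in> K"
    and add_mem: "x \<in> K \<Longrightarrow> y \<in> K \<Longrightarrow> x + y \<in> K"
    and mult_mem: "x \<in> K \<Longrightarrow> y \<in> K \<Longrightarrow> x * y \<in> K"
    and uminus_mem: "x \<in> K \<Longrightarrow> - x \<in> K"
    and inverse_mem: "x \<in> K \<Longrightarrow> inverse x \<in> K"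
    and two_nonzero: "(2::'a) \<noteq> 0"
begin

lemma diff_mem: "x \<in> K \<Longrightarrow> y \<in> K \<Longrightarrow> x - y \<in> K"
  by (metis add_mem uminus_mem diff_conv_add_uminus)

lemma divide_mem: "x \<in> K \<Longrightarrow> y \<in> K \<Longrightarrow> x / y \<in> K"
  by (metis mult_mem inverse_mem divide_inverse)

lemma power_mem: "x \<in> K \<Longrightarrow> x ^ n \<in> K"
  by (induct n) (simp_all add: one_mem mult_mem)

lemma two_mem: "2 \<in> K"
  by (metis add_mem one_mem one_add_one)

lemma four_mem: "4 \<in> K"
  by (metis add_mem two_mem numeral_Bit0)

lemma four_nonzero: "(4::'a) \<noteq> 0"
  by (metis two_nonzero mult_2 numeral_Bit0 mult_eq_0_iff)

lemmas closed = zero_mem one_mem add_mem mult_mem uminus_mem inverse_mem diff_mem divide_mem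
  power_mem two_mem four_mem

lemma coef_action_mem: "g \<in> K \<times> K \<times> K \<times> K \<Longrightarrow> v \<in> K \<times> K \<times> K \<Longrightarrow> coef_action g v \<in> K \<times> K \<times> K"
  by (cases g; cases v) (auto simp: coef_action_def intro!: closed)

lemma monic3_mem: "v \<in> K \<times> K \<times> K \<Longrightarrow> monic3 v \<in> K \<times> K \<times> K"
  by (cases v) (auto simp: monic3_def scale3_def lead3_def intro!: closed)

lemma finite_monic_forms: "finite (monic_forms K S)"
  by (rule finite_subset[of _ "K \<times> K \<times> K"]) (auto simp: monic_forms_def finite)

end

locale square_stable = finite_subfield +
  fixes S :: "'a::field set"
  assumes mult_square_mem: "k \<in> S \<Longrightarrow> \<mu> \<in> K \<Longrightarrow> \<mu> \<noteq> 0 \<Longrightarrow> k * \<mu>\<^sup>2 \<in> S"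
begin

lemma lead3_coef_action_monic_forms:
  "g \<in> SL2 K \<Longrightarrow> v \<in> monic_forms K S \<Longrightarrow> lead3 (coef_action g v) \<noteq> 0"
  by (rule lead3_coef_action_nonzero) (auto simp: SL2_def monic_forms_def lead3_def)

lemma monic3_coef_action_mem:
  assumes g: "g \<in> SL2 K" and v: "v \<in> monic_forms K S"
  shows "monic3 (coef_action g v) \<in> monic_forms K S"
proof -
  let ?w = "coef_action g v"
  have nz: "lead3 ?w \<noteq> 0"
    using g v by (rule lead3_coef_action_monic_forms)
  have wK: "?w \<in> K \<times> K \<times> K"
    using g v by (auto simp: SL2_def monic_forms_def intro: coef_action_mem)
  have "disc3 (monic3 ?w) / 4 = (disc3 v / 4) * (inverse (lead3 ?w))\<^sup>2"
    using g by (simp add: monic3_def disc3_scale3 disc3_coef_action SL2_def)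
  also have "\<dots> \<in> S"
    using v nz wK by (intro mult_square_mem) (auto simp: monic_forms_def lead3_def intro!: closed)
  finally show ?thesis
    using monic3_mem[OF wK] lead3_monic3[OF nz] by (simp add: monic_forms_def)
qed

lemma inj_on_monic3_coef_action:
  assumes g: "g \<in> SL2 K"
  shows "inj_on (\<lambda>v. monic3 (coef_action g v)) (monic_forms K S)"
proof (rule inj_onI)
  fix v w
  assume v: "v \<in> monic_forms K S" and w: "w \<in> monic_forms K S"
    and eq: "monic3 (coef_action g v) = monic3 (coef_action g w)"
  define a where "a = lead3 (coef_action g v)"
  define b where "b = lead3 (coef_action g w)"
  have a: "a \<noteq> 0" and b: "b \<noteq> 0"
    using lead3_coef_action_monic_forms[OF g] v w by (auto simp: a_def b_def)
  have "coef_action g v = scale3 a (monic3 (coef_action g w))"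
    using scale3_lead3_monic3[of "coef_action g v"] a eq by (simp add: a_def)
  also have "\<dots> = coef_action g (scale3 (a * inverse b) w)"
    by (simp add: monic3_def scale3_scale3 coef_action_scale3 b_def)
  moreover have "det2 g = 1"
    using g by (simp add: SL2_def)
  ultimately have vw: "v = scale3 (a * inverse b) w"
    by (metis coef_action_adjugate)
  then have "lead3 v = a * inverse b * lead3 w"
    using a b by (simp add: lead3_scale3)
  then have "a * inverse b = 1"
    using v w by (simp add: monic_forms_def)
  then show "v = w"
    using vw by (simp add: scale3_1)
qed

lemma bij_betw_monic3_coef_action:
  assumes "g \<in> SL2 K"
  shows "bij_betw (\<lambda>v. monic3 (coef_action g v)) (monic_forms K S) (monic_forms K S)"
  using assms finite_monic_forms monic3_coef_action_mem inj_on_monic3_coef_action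
  by (simp add: bij_betw_def endo_inj_surj image_subset_iff)

lemma prod_linform_coef_action:
  assumes g: "g \<in> SL2 K"
  shows "(\<Prod>v\<in>monic_forms K S. linform A0 A1 A2 (coef_action g v))
    = C3 (multiplier K S g) * (\<Prod>v\<in>monic_forms K S. linform A0 A1 A2 v)"
proof -
  have "(\<Prod>v\<in>monic_forms K S. linform A0 A1 A2 (coef_action g v)) =
        (\<Prod>v\<in>monic_forms K S. C3 (lead3 (coef_action g v)) * linform A0 A1 A2 (monic3 (coef_action g v)))"
    by (intro prod.cong refl)
      (metis linform_scale3 scale3_lead3_monic3 lead3_coef_action_monic_forms[OF g])
  also have "\<dots> = C3 (multiplier K S g) * (\<Prod>v\<in>monic_forms K S. linform A0 A1 A2 (monic3 (coef_action g v)))"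
    by (simp add: prod.distrib multiplier_def C3_prod)
  also have "(\<Prod>v\<in>monic_forms K S. linform A0 A1 A2 (monic3 (coef_action g v)))
      = (\<Prod>v\<in>monic_forms K S. linform A0 A1 A2 v)"
    by (rule prod.reindex_bij_betw[OF bij_betw_monic3_coef_action[OF g]])
  finally show ?thesis .
qed

lemma multiplier_mat_mult:
  assumes g: "g \<in> SL2 K"
  shows "multiplier K S (mat_mult g h) = multiplier K S g * multiplier K S h"
proof -
  have "multiplier K S (mat_mult g h)
      = (\<Prod>v\<in>monic_forms K S. lead3 (coef_action g v) * lead3 (coef_action h (monic3 (coef_action g v))))"
    unfolding multiplier_def coef_action_mat_mult
    by (intro prod.cong refl)
      (metis coef_action_scale3 lead3_scale3 scale3_lead3_monic3 lead3_coef_action_monic_forms[OF g])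
  also have "\<dots> = multiplier K S g * (\<Prod>v\<in>monic_forms K S. lead3 (coef_action h (monic3 (coef_action g v))))"
    by (simp add: prod.distrib multiplier_def)
  also have "(\<Prod>v\<in>monic_forms K S. lead3 (coef_action h (monic3 (coef_action g v)))) = multiplier K S h"
    unfolding multiplier_def by (rule prod.reindex_bij_betw[OF bij_betw_monic3_coef_action[OF g]])
  finally show ?thesis .
qed

text \<open>Conjugating an upper unitriangular matrix by \<open>w\<close> gives a lower one; the
multiplicativity of \<open>\<chi>\<close> makes \<open>\<chi>(w)\<close> and \<open>\<chi>(w\<^sup>-\<^sup>1)\<close> cancel.\<close>
lemma multiplier_lower:
  assumes "t \<in> K"
  shows "multiplier K S (1, 0, t, 1) = 1"
proof -
  let ?w = "(0, 1, -1, 0) :: 'a mat2" and ?w' = "(0, -1, 1, 0) :: 'a mat2"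
    and ?u = "(1, -t, 0, 1) :: 'a mat2"
  have w: "?w \<in> SL2 K" and wu: "mat_mult ?w ?u \<in> SL2 K"
    using assms by (auto simp: SL2_def det2_def mat_mult_def intro!: closed)
  have "(1, 0, t, 1) = mat_mult (mat_mult ?w ?u) ?w'"
    by (simp add: mat_mult_def)
  then have "multiplier K S (1, 0, t, 1) = multiplier K S (mat_mult ?w ?w')"
    using multiplier_mat_mult[OF wu] multiplier_mat_mult[OF w] by (simp add: multiplier_upper)
  also have "mat_mult ?w ?w' = (1, 0, 0, 1)"
    by (simp add: mat_mult_def)
  finally show ?thesis
    using multiplier_upper[of K S 0] by simp
qed

lemma multiplier_SL2_lower_nonzero:
  assumes g: "(a, b, c, d) \<in> SL2 K" and "c \<noteq> 0"
  shows "multiplier K S (a, b, c, d) = 1"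
proof -
  define x where "x = (a - 1) / c"
  define y where "y = (d - 1) / c"
  have K: "a \<in> K" "c \<in> K" "d \<in> K" and det: "a * d - b * c = 1"
    using g by (auto simp: SL2_def det2_def)
  then have "x \<in> K"
    by (auto simp: x_def intro!: closed)
  then have ux: "(1, x, 0, 1) \<in> SL2 K" and uxl: "mat_mult (1, x, 0, 1) (1, 0, c, 1) \<in> SL2 K"
    using K by (auto simp: SL2_def mat_mult_def det2_def intro!: closed)
  have "(a, b, c, d) = mat_mult (mat_mult (1, x, 0, 1) (1, 0, c, 1)) (1, y, 0, 1)"
    using det \<open>c \<noteq> 0\<close> by (simp add: mat_mult_def x_def y_def field_simps)
  then show ?thesis
    using multiplier_mat_mult[OF uxl] multiplier_mat_mult[OF ux] multiplier_lower[OF K(2)]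
    by (simp add: multiplier_upper)
qed

lemma multiplier_SL2:
  assumes g: "(a, b, c, d) \<in> SL2 K"
  shows "multiplier K S (a, b, c, d) = 1"
proof (cases "c = 0")
  case False
  then show ?thesis
    using g multiplier_SL2_lower_nonzero by blast
next
  case True
  have "a \<noteq> 0"
    using g True by (auto simp: SL2_def det2_def)
  then have "multiplier K S (a, b, -a, d - b) = 1"
    using g True
    by (intro multiplier_SL2_lower_nonzero) (auto simp: SL2_def det2_def algebra_simps intro!: closed)
  moreover have "(a, b, c, d) = mat_mult (1, 0, 1, 1) (a, b, -a, d - b)"
    using True by (simp add: mat_mult_def)
  moreover have "(1, 0, 1, 1) \<in> SL2 K"
    by (simp add: SL2_def det2_def closed)
  ultimately show ?thesis
    using multiplier_mat_mult multiplier_lower[OF one_mem] by simp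
qed

lemma prod_linform_act:
  assumes "(a, b, c, d) \<in> SL2 K"
  shows "(\<Prod>v\<in>monic_forms K S. linform (act0 a b c d) (act1 a b c d) (act2 a b c d) v)
    = (\<Prod>v\<in>monic_forms K S. linform A0 A1 A2 v)"
  using prod_linform_coef_action[OF assms] multiplier_SL2[OF assms] by (simp add: linform_act C3_1)

end

text \<open>\<open>(1, 2c, c\<^sup>2 - k)\<close> is the coefficient vector of the factor of \<open>\<gamma>\<^sub>k\<close> indexed by \<open>c\<close>;
its quarter-discriminant is \<open>k\<close>.\<close>
definition gamma_vectors :: "'a::field set \<Rightarrow> 'a set \<Rightarrow> 'a vec3 set" where
  "gamma_vectors K S = (\<lambda>(k, c). (1, 2 * c, c\<^sup>2 - k)) ` (S \<times> K)"

lemma zero_notin_gamma_vectors: "(0, y, z) \<notin> gamma_vectors K S"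
  by (auto simp: gamma_vectors_def)

context finite_subfield
begin

lemma gamma_vectors_eq:
  assumes "S \<subseteq> K"
  shows "gamma_vectors K S = {v \<in> monic_forms K S. fst v = 1}"
proof (intro set_eqI iffI)
  fix v
  assume "v \<in> gamma_vectors K S"
  then obtain k c where kc: "k \<in> S" "c \<in> K" "v = (1, 2 * c, c\<^sup>2 - k)"
    by (auto simp: gamma_vectors_def)
  have disc: "disc3 v / 4 = k"
    using four_nonzero by (simp add: kc disc3_def algebra_simps power2_eq_square)
  have "disc3 v / 4 \<in> S"
    unfolding disc using kc(1) .
  moreover have "v \<in> K \<times> K \<times> K"
    using kc assms by (auto intro!: closed)
  ultimately show "v \<in> {v \<in> monic_forms K S. fst v = 1}"
    using kc by (simp add: monic_forms_def lead3_def)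
next
  fix v
  assume v: "v \<in> {v \<in> monic_forms K S. fst v = 1}"
  obtain y z where v_eq: "v = (1, y, z)"
    using v by (cases v) auto
  define k where "k = (y\<^sup>2 - 4 * z) / 4"
  define c where "c = y / 2"
  have "v = (1, 2 * c, c\<^sup>2 - k)"
    using two_nonzero four_nonzero by (simp add: v_eq c_def k_def field_simps power2_eq_square)
  moreover have "(k, c) \<in> S \<times> K"
    using v by (auto simp: v_eq monic_forms_def disc3_def k_def c_def intro!: closed)
  ultimately show "v \<in> gamma_vectors K S"
    unfolding gamma_vectors_def by force
qed

lemma monic_forms_eq:
  assumes "S \<subseteq> K"
  shows "monic_forms K S = gamma_vectors K S \<union> {v \<in> (\<lambda>c. (0, 1, c)) ` K. 1 / 4 \<in> S}
    \<union> {v. v = (0, 0, 1) \<and> 0 \<in> S}"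
  unfolding gamma_vectors_eq[OF assms]
  by (auto simp: monic_forms_def lead3_eq_1_iff disc3_def closed)

lemma prod_linform_gamma_vectors:
  "(\<Prod>v\<in>gamma_vectors K S. linform x0 x1 x2 v) = (\<Prod>k\<in>S. gammaP K k x0 x1 x2)"
proof -
  have "inj_on (\<lambda>(k, c). (1::'a, 2 * c, c\<^sup>2 - k)) (S \<times> K)"
    using two_nonzero by (auto intro: inj_onI)
  then have "(\<Prod>v\<in>gamma_vectors K S. linform x0 x1 x2 v)
      = (\<Prod>(k, c)\<in>S \<times> K. linform x0 x1 x2 (1, 2 * c, c\<^sup>2 - k))"
    unfolding gamma_vectors_def by (subst prod.reindex) (simp_all add: case_prod_beta')
  also have "\<dots> = (\<Prod>k\<in>S. \<Prod>c\<in>K. linform x0 x1 x2 (1, 2 * c, c\<^sup>2 - k))"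
    by (rule prod.cartesian_product[symmetric])
  finally show ?thesis
    by (simp add: gammaP_def linform_def C3_1)
qed

lemma finite_gamma_vectors: "S \<subseteq> K \<Longrightarrow> finite (gamma_vectors K S)"
  unfolding gamma_vectors_def
  by (intro finite_imageI finite_cartesian_product) (auto intro: finite_subset finite)

lemma JP_eq_prod_linform: "JP K x0 x1 x2 = (\<Prod>v\<in>monic_forms K {0}. linform x0 x1 x2 v)"
proof -
  have "monic_forms K {0} = insert (0, 0, 1) (gamma_vectors K {0})"
    using monic_forms_eq[of "{0}"] zero_mem four_nonzero by auto
  moreover have "linform x0 x1 x2 (0, 0, 1) = x0"
    by (simp add: linform_def C3_0 C3_1)
  ultimately show ?thesis
    using zero_mem by (simp add: JP_def finite_gamma_vectors zero_notin_gamma_vectors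
        prod_linform_gamma_vectors)
qed

lemma GammaP_eq_prod_linform: "GammaP K x0 x1 x2 = (\<Prod>v\<in>monic_forms K (QNR K). linform x0 x1 x2 v)"
proof -
  have "QNR K \<subseteq> K" "1 / 4 \<notin> QNR K" "0 \<notin> QNR K"
    using two_nonzero four_nonzero closed
    by (auto simp: QNR_def intro!: bexI[of _ "1 / 2"] simp: power2_eq_square)
  then have "monic_forms K (QNR K) = gamma_vectors K (QNR K)"
    using monic_forms_eq[of "QNR K"] by simp
  then show ?thesis
    by (simp add: GammaP_def prod_linform_gamma_vectors)
qed

lemma BP_eq_prod_linform: "BP K x0 x1 x2 = (\<Prod>v\<in>monic_forms K (QR K). linform x0 x1 x2 v)"
proof -
  have QR: "QR K \<subseteq> K" "1 / 4 \<in> QR K" "0 \<notin> QR K"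
    using two_nonzero four_nonzero closed
    by (auto simp: QR_def intro!: bexI[of _ "1 / 2"] simp: power2_eq_square)
  then have forms: "monic_forms K (QR K) = (\<lambda>c. (0, 1, c)) ` K \<union> gamma_vectors K (QR K)"
    using monic_forms_eq[of "QR K"] by auto
  have "(\<Prod>v\<in>monic_forms K (QR K). linform x0 x1 x2 v)
      = (\<Prod>v\<in>(\<lambda>c. (0, 1, c)) ` K. linform x0 x1 x2 v) * (\<Prod>v\<in>gamma_vectors K (QR K). linform x0 x1 x2 v)"
    unfolding forms
    by (intro prod.union_disjoint) (use finite finite_gamma_vectors[OF QR(1)] zero_notin_gamma_vectors in auto)
  also have "(\<Prod>v\<in>(\<lambda>c. (0, 1, c)) ` K. linform x0 x1 x2 v) = betaP K x0 x1 x2"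
    by (subst prod.reindex) (auto simp: inj_on_def betaP_def linform_def C3_0 C3_1)
  finally show ?thesis
    by (simp add: BP_def prod_linform_gamma_vectors)
qed

end

sublocale finite_subfield \<subseteq> zero_class: square_stable K "{0}"
  by unfold_locales simp

sublocale finite_subfield \<subseteq> residues: square_stable K "QR K"
proof
  fix k \<mu> :: 'a
  assume k: "k \<in> QR K" and \<mu>: "\<mu> \<in> K" "\<mu> \<noteq> 0"
  then obtain c where "c \<in> K" "c\<^sup>2 = k" "k \<noteq> 0"
    by (auto simp: QR_def)
  then show "k * \<mu>\<^sup>2 \<in> QR K"
    using \<mu> by (auto simp: QR_def power_mult_distrib intro!: closed bexI[of _ "c * \<mu>"])
qed

sublocale finite_subfield \<subseteq> nonresidues: square_stable K "QNR K"
proof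
  fix k \<mu> :: 'a
  assume k: "k \<in> QNR K" and \<mu>: "\<mu> \<in> K" "\<mu> \<noteq> 0"
  have "c\<^sup>2 \<noteq> k * \<mu>\<^sup>2" if "c \<in> K" for c
  proof
    assume "c\<^sup>2 = k * \<mu>\<^sup>2"
    then have "(c / \<mu>)\<^sup>2 = k"
      using \<mu> by (simp add: power_divide)
    then show False
      using k \<mu> that by (auto simp: QNR_def intro: divide_mem)
  qed
  then show "k * \<mu>\<^sup>2 \<in> QNR K"
    using k \<mu> by (auto simp: QNR_def intro!: closed)
qed

context finite_subfield
begin

theorem SL2_invariant_JP_GammaP_BP:
  assumes "(a, b, c, d) \<in> SL2 K"
  shows "JP K (act0 a b c d) (act1 a b c d) (act2 a b c d) = JP K A0 A1 A2
    \<and> GammaP K (act0 a b c d) (act1 a b c d) (act2 a b c d) = GammaP K A0 A1 A2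
    \<and> BP K (act0 a b c d) (act1 a b c d) (act2 a b c d) = BP K A0 A1 A2"
  unfolding JP_eq_prod_linform GammaP_eq_prod_linform BP_eq_prod_linform
  using zero_class.prod_linform_act[OF assms] nonresidues.prod_linform_act[OF assms]
    residues.prod_linform_act[OF assms]
  by blast

end

lemma finite_subfield_Fq:
  assumes "prime CHAR('a::field)" "odd CHAR('a)" "q = CHAR('a) ^ n" "finite (Fq q :: 'a set)"
  shows "finite_subfield (Fq q :: 'a set)"
proof
  have "odd q"
    using assms(2,3) by simp
  then show "- x \<in> Fq q" if "x \<in> Fq q" for x :: 'a
    using that by (simp add: Fq_def power_minus_odd)
  show "x + y \<in> Fq q" if "x \<in> Fq q" "y \<in> Fq q" for x y :: 'a
    using that freshmans_dream'[OF assms(1,3)] by (simp add: Fq_def)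
  have "\<not> CHAR('a) dvd 2"
    using assms(1,2) primes_dvd_imp_eq[OF assms(1) two_is_prime_nat] by auto
  then show "(2::'a) \<noteq> 0"
    by (metis of_nat_eq_0_iff_char_dvd of_nat_numeral)
  show "0 \<in> (Fq q :: 'a set)"
    using \<open>odd q\<close> by (auto simp: Fq_def zero_power intro: odd_pos)
qed (use assms(4) in \<open>simp_all add: Fq_def power_mult_distrib power_inverse\<close>)

theorem lemma3p1:
  fixes p n q :: nat
  assumes "prime p" and "p > 2" and "CHAR('a::field) = p"
    and "n \<ge> 1" and "q = p ^ n"
    and "card (Fq q :: 'a set) = q"
  shows "\<forall>\<alpha>\<in>Fq q. \<forall>\<beta>\<in>Fq q. \<forall>\<gamma>\<in>Fq q. \<forall>\<delta>\<in>Fq q. \<alpha> * \<delta> - \<beta> * \<gamma> = (1::'a) \<longrightarrow>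
      JP (Fq q) (act0 \<alpha> \<beta> \<gamma> \<delta>) (act1 \<alpha> \<beta> \<gamma> \<delta>) (act2 \<alpha> \<beta> \<gamma> \<delta>) = JP (Fq q) A0 A1 A2 \<and>
      GammaP (Fq q) (act0 \<alpha> \<beta> \<gamma> \<delta>) (act1 \<alpha> \<beta> \<gamma> \<delta>) (act2 \<alpha> \<beta> \<gamma> \<delta>) = GammaP (Fq q) A0 A1 A2 \<and>
      BP (Fq q) (act0 \<alpha> \<beta> \<gamma> \<delta>) (act1 \<alpha> \<beta> \<gamma> \<delta>) (act2 \<alpha> \<beta> \<gamma> \<delta>) = BP (Fq q) A0 A1 A2"
proof (intro ballI impI)
  fix \<alpha> \<beta> \<gamma> \<delta> :: 'a
  assume "\<alpha> \<in> Fq q" "\<beta> \<in> Fq q" "\<gamma> \<in> Fq q" "\<delta> \<in> Fq q" "\<alpha> * \<delta> - \<beta> * \<gamma> = 1"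
  then have g: "(\<alpha>, \<beta>, \<gamma>, \<delta>) \<in> SL2 (Fq q)"
    by (simp add: SL2_def det2_def)
  have "finite (Fq q :: 'a set)"
    using assms(1,5,6) by (metis card_ge_0_finite prime_gt_0_nat zero_less_power)
  then interpret finite_subfield "Fq q :: 'a set"
    using assms(1-3,5) by (intro finite_subfield_Fq) (simp_all add: prime_odd_nat)
  show "JP (Fq q) (act0 \<alpha> \<beta> \<gamma> \<delta>) (act1 \<alpha> \<beta> \<gamma> \<delta>) (act2 \<alpha> \<beta> \<gamma> \<delta>) = JP (Fq q) A0 A1 A2 \<and>
      GammaP (Fq q) (act0 \<alpha> \<beta> \<gamma> \<delta>) (act1 \<alpha> \<beta> \<gamma> \<delta>) (act2 \<alpha> \<beta> \<gamma> \<delta>) = GammaP (Fq q) A0 A1 A2 \<and>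
      BP (Fq q) (act0 \<alpha> \<beta> \<gamma> \<delta>) (act1 \<alpha> \<beta> \<gamma> \<delta>) (act2 \<alpha> \<beta> \<gamma> \<delta>) = BP (Fq q) A0 A1 A2"
    using g by (rule SL2_invariant_JP_GammaP_BP)
qed

end
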